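(* (a) For every $n\ge0$, the number of words $w\in\mathbb{P}^*$ with letter sum $n$ into which $121$ does not embed equals $\frac{n(n-1)}{2}+1$. (b) For every $n\ge1$, the number of words $w\in\mathcal{S}(121)$ with letter sum $3+n$ equals $\frac{n(n+1)(n+2)}{6}$.
   Context: $\mathbb{P}^*$ is the set of finite words over the positive integers. An embedding of $u$ into $w$ is a string of $|u|$ consecutive letters of $w$ whose $k$-th letter is $\ge$ the $k$-th letter of $u$ for every $k$. $\mathcal{S}(u)$ is the set of words $w$ admitting an embedding of $u$ such that the last $|u|$ letters of $w$ form the only embedding of $u$ into $w$. The letter sum of $w=w_1\ldots w_m$ is $\sum_k w_k$. *)

theory Defs
  imports Main
begin

definition pword :: "nat list \<Rightarrow> bool" where
  "pword w \<longleftrightarrow> (\<forall>a\<in>set w. 1 \<le> a)"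

definition embeds_at :: "nat list \<Rightarrow> nat list \<Rightarrow> nat \<Rightarrow> bool" where
  "embeds_at u w i \<longleftrightarrow> i + length u \<le> length w \<and> (\<forall>k<length u. u ! k \<le> w ! (i + k))"

definition embeds :: "nat list \<Rightarrow> nat list \<Rightarrow> bool" where
  "embeds u w \<longleftrightarrow> (\<exists>i. embeds_at u w i)"

definition S_set :: "nat list \<Rightarrow> nat list set" where
  "S_set u = {w. pword w \<and> embeds u w \<and> (\<forall>i. embeds_at u w i \<longrightarrow> i = length w - length u)}"

end

theory Submission imports Defs begin

(* For a word w of positive integers, 121 embeds at position i exactly when
   w has at least three letters from i on and the letter w!(i+1) is at least 2.
   Hence a word of length >= 2 avoids 121 iff all its interior letters are 1,
   i.e. it has the shape (x+1) 1^y (z+1); and a word lies in S(121) iff it has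
   the shape (x+1) 1^y (z+2) (t+1), the embedding being forced onto the letter
   z+2.  These shapes are parametrised bijectively by weak compositions
   [x,y,z] of n-2, resp. [x,y,z,t] of n-1, which are counted by stars and bars
   (card_length_sum_list).  Part (a) then reads (n choose 2) + 1, the extra word
   being the single letter [n] (words of sum 0 or 1 are treated directly), and
   part (b) reads (n+2 choose 3). *)

text \<open>In a positive word the outer letters of 121 always fit, so only the middle one matters.\<close>
lemma embeds_at_121_iff:
  assumes "pword w"
  shows "embeds_at [1,2,1] w i \<longleftrightarrow> i + 3 \<le> length w \<and> 2 \<le> w ! (i + 1)"
proof -
  have "(\<forall>k<3. [1,2,1::nat] ! k \<le> w ! (i + k)) \<longleftrightarrow>
        1 \<le> w ! i \<and> 2 \<le> w ! (i + 1) \<and> 1 \<le> w ! (i + 2)"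
    by (auto simp: less_Suc_eq numeral_3_eq_3)
  moreover have "i + 3 \<le> length w \<Longrightarrow> 1 \<le> w ! i \<and> 1 \<le> w ! (i + 2)"
    using assms unfolding pword_def by (auto intro!: bspec[OF _ nth_mem])
  ultimately show ?thesis unfolding embeds_at_def by auto
qed

lemma split_first_and_final:
  assumes "Suc k \<le> length w"
  shows "\<exists>a v t. w = a # v @ t \<and> length t = k"
proof -
  obtain a r where w: "w = a # r" using assms by (cases w) auto
  show ?thesis
    using assms w
    by (intro exI[of _ a] exI[of _ "take (length r - k) r"] exI[of _ "drop (length r - k) r"]) simp
qed

lemma interior_ones:
  assumes pos: "pword (a # v @ t)" and "t \<noteq> []"
    and none: "\<forall>j<length v. \<not> embeds_at [1,2,1] (a # v @ t) j"
  shows "v = replicate (length v) 1"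
proof (rule nth_equalityI)
  fix j assume j: "j < length v"
  have "1 \<le> v ! j" using pos j unfolding pword_def by auto
  moreover have "j + 3 \<le> length (a # v @ t)" using j \<open>t \<noteq> []\<close> by (cases t) auto
  then have "\<not> 2 \<le> v ! j"
    using none j embeds_at_121_iff[OF pos, of j] by (simp add: nth_append)
  ultimately show "v ! j = replicate (length v) 1 ! j" using j by simp
qed simp

lemma embedding_after_ones:
  assumes pos: "pword (a # replicate k 1 @ t)"
    and emb: "embeds_at [1,2,1] (a # replicate k 1 @ t) i"
  shows "k \<le> i"
proof (rule ccontr)
  assume "\<not> k \<le> i"
  then have "(a # replicate k 1 @ t) ! (i + 1) = 1" by (simp add: nth_append)
  then show False using emb embeds_at_121_iff[OF pos] by simp
qed

definition compositions :: "nat \<Rightarrow> nat \<Rightarrow> nat list set" where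
  "compositions m N = {l. length l = m \<and> sum_list l = N}"

lemma card_compositions: "card (compositions m N) = (N + m - 1) choose N"
  unfolding compositions_def by (rule card_length_sum_list)

text \<open>Finiteness follows since the stars-and-bars count is positive.\<close>
lemma finite_compositions:
  assumes "1 \<le> m"
  shows "finite (compositions m N)"
  using assms card_compositions[of m N] zero_less_binomial[of N "N + m - 1"]
  by (metis card.infinite le_add1 add_diff_assoc not_less_zero)

lemma compositions_3: "l \<in> compositions 3 N \<longleftrightarrow> (\<exists>x y z. l = [x,y,z] \<and> x + y + z = N)"
  by (auto simp: compositions_def numeral_3_eq_3 length_Suc_conv)

lemma compositions_4:
  "l \<in> compositions 4 N \<longleftrightarrow> (\<exists>x y z t. l = [x,y,z,t] \<and> x + y + z + t = N)"
  by (auto simp: compositions_def numeral_eq_Suc length_Suc_conv)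

lemma six_times_choose_3: "6 * (m + 3 choose 3) = (m + 1) * (m + 2) * (m + 3)"
proof (induction m)
  case 0 show ?case by (simp add: numeral_eq_Suc)
next
  case (Suc m)
  have "Suc m + 3 choose 3 = (m + 3 choose 2) + (m + 3 choose 3)"
    by (simp add: numeral_eq_Suc)
  moreover have "2 * (m + 3 choose 2) = (m + 3) * (m + 2)"
    by (simp add: choose_two)
  ultimately show ?case using Suc.IH by (simp add: algebra_simps)
qed

definition avoiding_word :: "nat list \<Rightarrow> nat list" where
  "avoiding_word l = Suc (l ! 0) # replicate (l ! 1) 1 @ [Suc (l ! 2)]"

lemma avoiding_word_simp [simp]:
  "avoiding_word [x,y,z] = Suc x # replicate y 1 @ [Suc z]"
  by (simp add: avoiding_word_def)

lemma inj_avoiding_word: "inj_on avoiding_word (compositions 3 N)"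
  by (rule inj_on_inverseI[where g = "\<lambda>w. [hd w - 1, length w - 2, last w - 1]"])
     (auto simp: compositions_3)

lemma avoiding_word_avoids:
  assumes "l \<in> compositions 3 N"
  shows "pword (avoiding_word l) \<and> sum_list (avoiding_word l) = N + 2
         \<and> \<not> embeds [1,2,1] (avoiding_word l)"
proof -
  obtain x y z where l: "l = [x,y,z]" "x + y + z = N" using assms compositions_3 by blast
  let ?w = "Suc x # replicate y 1 @ [Suc z]"
  have pos: "pword ?w" by (auto simp: pword_def)
  have "\<not> embeds_at [1,2,1] ?w i" for i
    using embedding_after_ones[OF pos] embeds_at_121_iff[OF pos] by fastforce
  then show ?thesis using pos l by (simp add: embeds_def sum_list_replicate)
qed

lemma avoiding_word_complete:
  assumes pos: "pword w" and avoid: "\<not> embeds [1,2,1] w" and len: "2 \<le> length w"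
  shows "w \<in> avoiding_word ` compositions 3 (sum_list w - 2)"
proof -
  obtain a v t where w: "w = a # v @ t" and "length t = 1"
    using split_first_and_final[of 1 w] len by auto
  then obtain b where t: "t = [b]" by (auto simp: length_Suc_conv)
  have "v = replicate (length v) 1"
    using interior_ones[of a v t] pos avoid w t by (auto simp: embeds_def)
  then obtain k where w: "w = a # replicate k 1 @ [b]" using w t by metis
  have "1 \<le> a" "1 \<le> b" using pos w by (auto simp: pword_def)
  then have "w = avoiding_word [a - 1, k, b - 1]"
    and "[a - 1, k, b - 1] \<in> compositions 3 (sum_list w - 2)"
    using w by (auto simp: compositions_3 sum_list_replicate)
  then show ?thesis by blast
qed

text \<open>Words of sum at most 1 are too short to contain 121.\<close>
lemma avoiding_121_small:
  assumes "n < 2"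
  shows "{w. pword w \<and> sum_list w = n \<and> \<not> embeds [1,2,1] w} = {replicate n 1}"
proof -
  have "pword w \<and> sum_list w = n \<longleftrightarrow> w = replicate n 1" for w
    using assms by (cases w; cases "tl w") (auto simp: pword_def less_2_cases_iff)
  then show ?thesis by (auto simp: embeds_def embeds_at_def less_2_cases_iff assms)
qed

lemma avoiding_121_large:
  assumes "2 \<le> n"
  shows "{w. pword w \<and> sum_list w = n \<and> \<not> embeds [1,2,1] w}
         = insert [n] (avoiding_word ` compositions 3 (n - 2))"
proof -
  have "w \<in> insert [n] (avoiding_word ` compositions 3 (n - 2))"
    if "pword w" "sum_list w = n" "\<not> embeds [1,2,1] w" for w
  proof (cases "2 \<le> length w")
    case True then show ?thesis using avoiding_word_complete[OF that(1,3)] that(2) by blast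
  next
    case False
    then consider "w = []" | x where "w = [x]" by (cases w) (auto simp: Suc_le_eq)
    then show ?thesis using that(2) assms by cases auto
  qed
  moreover have "pword [n] \<and> sum_list [n] = n \<and> \<not> embeds [1,2,1] [n]"
    using assms by (auto simp: pword_def embeds_def embeds_at_def)
  moreover have "pword w \<and> sum_list w = n \<and> \<not> embeds [1,2,1] w"
    if "w \<in> avoiding_word ` compositions 3 (n - 2)" for w
    using that avoiding_word_avoids assms by auto
  ultimately show ?thesis by blast
qed

theorem count_avoiding_121:
  "card {w. pword w \<and> sum_list w = n \<and> \<not> embeds [1,2,1] w} = n * (n - 1) div 2 + 1"
proof (cases "2 \<le> n")
  case True
  have "card (avoiding_word ` compositions 3 (n - 2)) = n choose 2"
    using card_image[OF inj_avoiding_word] card_compositions[of 3 "n - 2"]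
      binomial_symmetric[of 2 n] True by simp
  moreover have "[n] \<notin> avoiding_word ` compositions 3 (n - 2)"
    by (auto simp: compositions_3)
  ultimately show ?thesis
    using avoiding_121_large[OF True] finite_compositions[of 3 "n - 2"]
    by (simp add: choose_two)
next
  case False then show ?thesis using avoiding_121_small[of n] by auto
qed

definition unique_word :: "nat list \<Rightarrow> nat list" where
  "unique_word l = Suc (l ! 0) # replicate (l ! 1) 1 @ [l ! 2 + 2, Suc (l ! 3)]"

lemma unique_word_simp [simp]:
  "unique_word [x,y,z,t] = Suc x # replicate y 1 @ [z + 2, Suc t]"
  by (simp add: unique_word_def)

lemma inj_unique_word: "inj_on unique_word (compositions 4 N)"
  by (rule inj_on_inverseI[where
        g = "\<lambda>w. [hd w - 1, length w - 3, last (butlast w) - 2, last w - 1]"])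
     (auto simp: compositions_4 butlast_append)

text \<open>Every encoded word lies in S(121), its only embedding using the letter z+2 \<dots>\<close>
lemma unique_word_in_S:
  assumes "l \<in> compositions 4 N"
  shows "unique_word l \<in> S_set [1,2,1] \<and> sum_list (unique_word l) = N + 4"
proof -
  obtain x y z t where l: "l = [x,y,z,t]" "x + y + z + t = N"
    using assms compositions_4 by blast
  let ?w = "Suc x # replicate y 1 @ [z + 2, Suc t]"
  have pos: "pword ?w" by (auto simp: pword_def)
  have "embeds_at [1,2,1] ?w y" using embeds_at_121_iff[OF pos] by (simp add: nth_append)
  moreover have "i = length ?w - length [1,2,1::nat]" if "embeds_at [1,2,1] ?w i" for i
    using that embedding_after_ones[OF pos] embeds_at_121_iff[OF pos] by fastforce
  ultimately have "?w \<in> S_set [1,2,1]" using pos unfolding S_set_def embeds_def by blast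
  then show ?thesis using l by (simp add: sum_list_replicate)
qed

text \<open>\<dots> and every word of S(121) arises this way: the final embedding forces the
  penultimate letter to be at least 2 and all earlier interior letters to be 1.\<close>
lemma unique_word_complete:
  assumes "w \<in> S_set [1,2,1]"
  shows "w \<in> unique_word ` compositions 4 (sum_list w - 4)"
proof -
  have pos: "pword w" and "embeds [1,2,1] w"
    and last_only: "\<And>i. embeds_at [1,2,1] w i \<Longrightarrow> i = length w - 3"
    using assms by (auto simp: S_set_def)
  then obtain i where "embeds_at [1,2,1] w i" by (auto simp: embeds_def)
  then have i: "i + 3 \<le> length w" "2 \<le> w ! (i + 1)" "i = length w - 3"
    using embeds_at_121_iff[OF pos] last_only by auto
  obtain a v t where w: "w = a # v @ t" and "length t = 2"
    using split_first_and_final[of 2 w] i by auto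
  then obtain c b where t: "t = [c, b]" by (auto simp: length_Suc_conv numeral_2_eq_2)
  have "v = replicate (length v) 1"
    using interior_ones[of a v t] pos w t last_only by fastforce
  then obtain k where w: "w = a # replicate k 1 @ [c, b]" using w t by metis
  have "2 \<le> c" using i w by (simp add: nth_append)
  moreover have "1 \<le> a" "1 \<le> b" using pos w by (auto simp: pword_def)
  ultimately have "w = unique_word [a - 1, k, c - 2, b - 1]"
    and "[a - 1, k, c - 2, b - 1] \<in> compositions 4 (sum_list w - 4)"
    using w by (auto simp: compositions_4 sum_list_replicate)
  then show ?thesis by blast
qed

lemma S_121_by_sum:
  "{w \<in> S_set [1,2,1]. sum_list w = m + 4} = unique_word ` compositions 4 m"
proof (intro equalityI subsetI)
  fix w assume "w \<in> {w \<in> S_set [1,2,1]. sum_list w = m + 4}"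
  then show "w \<in> unique_word ` compositions 4 m" using unique_word_complete[of w] by simp
next
  fix w assume "w \<in> unique_word ` compositions 4 m"
  then show "w \<in> {w \<in> S_set [1,2,1]. sum_list w = m + 4}" using unique_word_in_S by auto
qed

theorem count_S_121:
  assumes "1 \<le> n"
  shows "card {w \<in> S_set [1,2,1]. sum_list w = 3 + n} = n * (n + 1) * (n + 2) div 6"
proof -
  obtain m where m: "n = m + 1" using assms by (metis add.commute le_Suc_ex)
  then have "{w \<in> S_set [1,2,1]. sum_list w = 3 + n} = unique_word ` compositions 4 m"
    using S_121_by_sum[of m] by (simp add: add.commute)
  then have "card {w \<in> S_set [1,2,1]. sum_list w = 3 + n} = m + 3 choose 3"
    using card_image[OF inj_unique_word] card_compositions[of 4 m]
      binomial_symmetric[of 3 "m + 3"] by (simp add: add.commute)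
  also have "\<dots> = (m + 1) * (m + 2) * (m + 3) div 6"
    using six_times_choose_3[of m] by simp
  finally show ?thesis using m by (simp add: algebra_simps)
qed

theorem mainTheorem13:
  shows "(\<forall>n::nat. card {w. pword w \<and> sum_list w = n \<and> \<not> embeds [1,2,1] w}
            = n * (n - 1) div 2 + 1)
       \<and> (\<forall>n::nat. 1 \<le> n \<longrightarrow> card {w \<in> S_set [1,2,1]. sum_list w = 3 + n}
            = n * (n + 1) * (n + 2) div 6)"
  using count_avoiding_121 count_S_121 by blast

end
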